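(* Let $S$ be the topological space consisting of a convergent sequence of distinct points $s_1, s_2, \dots$ together with its limit $s_0$ (i.e. $S$ is homeomorphic to $\{0\} \cup \{1/k : k \geq 1\} \subset \mathbb{R}$ with the subspace topology). Then the Milnor-Thurston homology groups of $S$ satisfy $\mathcal{H}_n(S) = 0$ for all $n > 0$, and $\mathcal{H}_0(S) \cong \ell^1$ as real vector spaces, where $\ell^1 = \{(a_k)_{k \geq 0} : a_k \in \mathbb{R},\ \sum_{k=0}^\infty |a_k| < \infty\}$.
   Context: Milnor-Thurston (measure) homology: for a topological space $X$ and integer $k \geq 0$, let $C^0(\Delta^k, X)$ be the space of continuous maps from the standard $k$-simplex $\Delta^k$ to $X$ (singular simplices), with the compact-open topology. A (signed) measure is a $\sigma$-additive real-valued set function vanishing on the empty set. A carrier of a Borel measure $\mu$ on $C^0(\Delta^k,X)$ is a set $D$ such that every Borel subset of the complement of $D$ has measure zero. $\mathcal{C}_k(X)$ is the real vector space of finite signed Borel measures on $C^0(\Delta^k,X)$ admitting a compact carrier. For a continuous map $f$ between such spaces, the image measure is $(f\mu)(A) = \mu(f^{-1}(A))$. The boundary $\partial : \mathcal{C}_k(X) \to \mathcal{C}_{k-1}(X)$ is $\partial = \sum_{i=0}^k (-1)^i \partial_i$, where $\partial_i \mu$ is the image measure of $\mu$ under $\sigma \mapsto \sigma \circ \delta_i$, with $\delta_i : \Delta^{k-1} \to \Delta^k$ the standard inclusion of the $i$-th face. $(\mathcal{C}_*(X), \partial)$ is a chain complex and its homology $\mathcal{H}_*(X)$ (real vector spaces)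 is the Milnor-Thurston homology of $X$. *)

theory Defs
  imports "HOL-Analysis.Analysis" "HOL-Homology.Homology"
begin

text \<open>The space of singular k-simplices C^0(Delta^k, X) (library notion singular_simplex,
  maps normalised to be extensional on the standard simplex).\<close>
definition mt_simplices :: "nat \<Rightarrow> 'a topology \<Rightarrow> ((nat \<Rightarrow> real) \<Rightarrow> 'a) set" where
  "mt_simplices k X = {f. singular_simplex k X f}"

definition compact_open_top :: "nat \<Rightarrow> 'a topology \<Rightarrow> ((nat \<Rightarrow> real) \<Rightarrow> 'a) topology" where
  "compact_open_top k X = topology_generated_by
     {{f \<in> mt_simplices k X. f ` K \<subseteq> U} | K U.
        compactin (subtopology (powertop_real UNIV) (standard_simplex k)) K \<and> openin X U}"

definition borel_sets_of :: "'b topology \<Rightarrow> 'b set set" where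
  "borel_sets_of T = sigma_sets (topspace T) {U. openin T U}"

text \<open>We represent it as a function on all sets which is zero
  outside the Borel sets (so that equal measures are equal functions).\<close>
definition finite_signed_borel_measure :: "'b topology \<Rightarrow> ('b set \<Rightarrow> real) \<Rightarrow> bool" where
  "finite_signed_borel_measure T \<mu> \<longleftrightarrow>
     \<mu> {} = 0 \<and>
     (\<forall>A::nat \<Rightarrow> 'b set. range A \<subseteq> borel_sets_of T \<longrightarrow> disjoint_family A \<longrightarrow>
         (\<lambda>n. \<mu> (A n)) sums \<mu> (\<Union>n. A n)) \<and>
     (\<forall>A. A \<notin> borel_sets_of T \<longrightarrow> \<mu> A = 0)"

definition is_carrier :: "'b topology \<Rightarrow> ('b set \<Rightarrow> real) \<Rightarrow> 'b set \<Rightarrow> bool" where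
  "is_carrier T \<mu> D \<longleftrightarrow> (\<forall>B \<in> borel_sets_of T. B \<subseteq> topspace T - D \<longrightarrow> \<mu> B = 0)"

definition mt_chains :: "'a topology \<Rightarrow> nat \<Rightarrow> (((nat \<Rightarrow> real) \<Rightarrow> 'a) set \<Rightarrow> real) set" where
  "mt_chains X k = {\<mu>. finite_signed_borel_measure (compact_open_top k X) \<mu> \<and>
       (\<exists>D. compactin (compact_open_top k X) D \<and> is_carrier (compact_open_top k X) \<mu> D)}"

definition mt_face :: "'a topology \<Rightarrow> nat \<Rightarrow> nat \<Rightarrow> (((nat \<Rightarrow> real) \<Rightarrow> 'a) set \<Rightarrow> real)
    \<Rightarrow> (((nat \<Rightarrow> real) \<Rightarrow> 'a) set \<Rightarrow> real)" where
  "mt_face X k i \<mu> = (\<lambda>A. if A \<in> borel_sets_of (compact_open_top (k - 1) X)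
      then \<mu> {\<sigma> \<in> mt_simplices k X. singular_face k i \<sigma> \<in> A} else 0)"

definition mt_boundary :: "'a topology \<Rightarrow> nat \<Rightarrow> (((nat \<Rightarrow> real) \<Rightarrow> 'a) set \<Rightarrow> real)
    \<Rightarrow> (((nat \<Rightarrow> real) \<Rightarrow> 'a) set \<Rightarrow> real)" where
  "mt_boundary X k \<mu> = (if k = 0 then (\<lambda>A. 0)
      else (\<lambda>A. \<Sum>i\<le>k. (-1) ^ i * mt_face X k i \<mu> A))"

definition mt_cycles :: "'a topology \<Rightarrow> nat \<Rightarrow> (((nat \<Rightarrow> real) \<Rightarrow> 'a) set \<Rightarrow> real) set" where
  "mt_cycles X k = {\<mu> \<in> mt_chains X k. mt_boundary X k \<mu> = (\<lambda>A. 0)}"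

definition mt_boundaries :: "'a topology \<Rightarrow> nat \<Rightarrow> (((nat \<Rightarrow> real) \<Rightarrow> 'a) set \<Rightarrow> real) set" where
  "mt_boundaries X k = mt_boundary X (Suc k) ` mt_chains X (Suc k)"

definition mt_class :: "'a topology \<Rightarrow> nat \<Rightarrow> (((nat \<Rightarrow> real) \<Rightarrow> 'a) set \<Rightarrow> real)
    \<Rightarrow> (((nat \<Rightarrow> real) \<Rightarrow> 'a) set \<Rightarrow> real) set" where
  "mt_class X k z = {(\<lambda>A. z A + b A) | b. b \<in> mt_boundaries X k}"

text \<open>Milnor-Thurston homology \<H>_k(X) = Z_k(X) / B_k(X), as the set of cosets;
  its vector space operations are induced by those on cycles.\<close>
definition mt_homology :: "'a topology \<Rightarrow> nat \<Rightarrow> (((nat \<Rightarrow> real) \<Rightarrow> 'a) set \<Rightarrow> real) set set" where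
  "mt_homology X k = mt_class X k ` mt_cycles X k"

definition ell1 :: "(nat \<Rightarrow> real) set" where
  "ell1 = {a. summable (\<lambda>k. \<bar>a k\<bar>)}"

definition conv_seq_space :: "real topology" where
  "conv_seq_space = top_of_set ({0} \<union> {1 / real k | k. k \<ge> 1})"

end

theory Submission
  imports Defs
begin

text \<open>Every singular simplex in a countable metric space S is constant, since its image is
  connected. So the space of k-simplices is a homeomorphic copy of S; for S countable and compact
  every subset of it is Borel and the carrier condition is vacuous, and a k-chain is just an
  absolutely summable family of masses on the points of S. All faces of a constant simplex are
  the constant simplex one dimension lower, so the boundary from degree k is zero for odd k and,
  for even k \<ge> 2, the 0-th face map, an isomorphism of chain groups. The chain complex thus
  alternates between isomorphisms and zero maps: it is exact in positive degrees, and in degree 0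
  homology equals the chains, i.e. the summable families indexed by the points of S.\<close>

section \<open>Simplices in a countable metric space\<close>

definition const_simplex :: "nat \<Rightarrow> 'a \<Rightarrow> (nat \<Rightarrow> real) \<Rightarrow> 'a" where
  "const_simplex k p = restrict (\<lambda>x. p) (standard_simplex k)"

lemma simplicial_vertex_const_simplex [simp]: "simplicial_vertex 0 (const_simplex k p) = p"
  by (simp add: simplicial_vertex_def const_simplex_def)

lemma const_simplex_eq_iff [simp]: "const_simplex k p = const_simplex k q \<longleftrightarrow> p = q"
  by (metis simplicial_vertex_const_simplex)

lemma const_simplex_image: "K \<subseteq> standard_simplex k \<Longrightarrow> K \<noteq> {} \<Longrightarrow> const_simplex k p ` K = {p}"
  by (auto simp: const_simplex_def)

lemma singular_simplex_const_simplex: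
  "p \<in> topspace X \<Longrightarrow> singular_simplex k X (const_simplex k p)"
  unfolding singular_simplex_def const_simplex_def
  by (auto intro: continuous_map_eq[where f="\<lambda>x. p"])

lemma singular_face_const_simplex:
  "1 \<le> k \<Longrightarrow> i \<le> k \<Longrightarrow> singular_face k i (const_simplex k p) = const_simplex (k - 1) p"
  unfolding singular_face_def const_simplex_def
  using simplical_face_in_standard_simplex by (auto simp: fun_eq_iff)

text \<open>The image of a simplex is connected, and a connected subset of a metric space with
  two points is uncountable.\<close>
lemma singular_simplex_countable_metric:
  fixes S :: "'a::metric_space set"
  assumes S: "countable S" and \<sigma>: "singular_simplex k (top_of_set S) \<sigma>"
  shows "\<sigma> = const_simplex k (simplicial_vertex 0 \<sigma>)" and "simplicial_vertex 0 \<sigma> \<in> S"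
proof -
  let ?v = "simplicial_vertex 0 \<sigma>"
  have "connectedin (top_of_set S) (\<sigma> ` standard_simplex k)"
    using \<sigma> unfolding singular_simplex_def
    by (metis connectedin_continuous_map_image connectedin_standard_simplex connectedin_subtopology
        order_refl)
  then have conn: "connected (\<sigma> ` standard_simplex k)" and sub: "\<sigma> ` standard_simplex k \<subseteq> S"
    by (auto simp: connectedin_subtopology)
  have vertex: "(\<lambda>j. if j = 0 then 1 else 0) \<in> standard_simplex k"
    by simp
  then show "?v \<in> S"
    using sub by (auto simp: simplicial_vertex_def)
  have "\<sigma> x = ?v" if "x \<in> standard_simplex k" for x
    using connected_uncountable[OF conn] countable_subset[OF sub S] that vertex
    by (fastforce simp: simplicial_vertex_def)
  then show "\<sigma> = const_simplex k ?v"
    using \<sigma> by (auto simp: singular_simplex_def const_simplex_def extensional_def)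
qed

lemma mt_simplices_countable_metric:
  fixes S :: "'a::metric_space set"
  assumes "countable S"
  shows "mt_simplices k (top_of_set S) = const_simplex k ` S"
  using singular_simplex_countable_metric[OF assms] singular_simplex_const_simplex[of _ "top_of_set S"]
  unfolding mt_simplices_def by force

section \<open>The compact-open topology on simplices\<close>

lemma mt_simplices_image_subset:
  "\<sigma> \<in> mt_simplices k X \<Longrightarrow> \<sigma> ` standard_simplex k \<subseteq> topspace X"
  using continuous_map_image_subset_topspace
  by (fastforce simp: mt_simplices_def singular_simplex_def)

lemma topspace_compact_open_top: "topspace (compact_open_top k X) = mt_simplices k X"
proof -
  have "mt_simplices k X = {f \<in> mt_simplices k X. f ` standard_simplex k \<subseteq> topspace X}"
    using mt_simplices_image_subset by blast
  moreover have "compactin (subtopology (powertop_real UNIV) (standard_simplex k)) (standard_simplex k)"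
    by (simp add: compactin_subtopology compactin_standard_simplex)
  ultimately show ?thesis
    unfolding compact_open_top_def topology_generated_by_topspace by blast
qed

lemma continuous_map_const_simplex: "continuous_map X (compact_open_top k X) (const_simplex k)"
  unfolding compact_open_top_def
proof (rule continuous_on_generated_topo)
  fix U assume "U \<in> {{f \<in> mt_simplices k X. f ` K \<subseteq> V} | K V.
        compactin (subtopology (powertop_real UNIV) (standard_simplex k)) K \<and> openin X V}"
  then obtain K V where U: "U = {f \<in> mt_simplices k X. f ` K \<subseteq> V}"
    and K: "K \<subseteq> standard_simplex k" and V: "openin X V"
    by (auto simp: compactin_subtopology)
  have "const_simplex k p \<in> U \<longleftrightarrow> K = {} \<or> p \<in> V" if "p \<in> topspace X" for p
    using const_simplex_image[OF K, of p] singular_simplex_const_simplex[OF that]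
    by (cases "K = {}") (auto simp: U mt_simplices_def)
  then have "const_simplex k -` U \<inter> topspace X = (if K = {} then topspace X else V)"
    using openin_subset[OF V] by auto
  then show "openin X (const_simplex k -` U \<inter> topspace X)"
    using V by simp
next
  show "const_simplex k ` topspace X \<subseteq> \<Union> {{f \<in> mt_simplices k X. f ` K \<subseteq> V} | K V.
        compactin (subtopology (powertop_real UNIV) (standard_simplex k)) K \<and> openin X V}"
    using topspace_compact_open_top[of k X] singular_simplex_const_simplex
    unfolding compact_open_top_def topology_generated_by_topspace by (auto simp: mt_simplices_def)
qed

lemma sigma_algebra_borel_sets_of: "sigma_algebra (topspace T) (borel_sets_of T)"
  unfolding borel_sets_of_def by (rule sigma_algebra_sigma_sets) (auto dest: openin_subset)

lemma borel_sets_of_subset_topspace: "B \<in> borel_sets_of T \<Longrightarrow> B \<subseteq> topspace T"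
  unfolding borel_sets_of_def by (erule sigma_sets_into_sp[rotated]) (auto dest: openin_subset)

lemma Inter_ball_inverse_Suc: "(\<Inter>n. ball p (1 / real (Suc n))) = {p}"
proof -
  have "q = p" if "\<And>n. dist p q < 1 / real (Suc n)" for q
  proof (rule ccontr)
    assume "q \<noteq> p"
    then obtain n where "inverse (real (Suc n)) < dist p q"
      using reals_Archimedean by (metis dist_pos_lt)
    then show False
      using that[of n] by (simp add: inverse_eq_divide)
  qed
  then show ?thesis by auto
qed

text \<open>The singleton is the countable intersection of the open sets of simplices with image
  in the balls of radius 1/(n+1) about p.\<close>
lemma singleton_const_simplex_in_borel_sets:
  fixes S :: "'a::metric_space set"
  assumes p: "p \<in> S"
  shows "{const_simplex k p} \<in> borel_sets_of (compact_open_top k (top_of_set S))"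
proof -
  let ?T = "compact_open_top k (top_of_set S)"
  define U where "U n = {f \<in> mt_simplices k (top_of_set S).
    f ` standard_simplex k \<subseteq> S \<inter> ball p (1 / real (Suc n))}" for n
  have "openin (top_of_set S) (S \<inter> ball p r)" for r
    by (simp add: openin_open_Int)
  then have "openin ?T (U n)" for n
    unfolding U_def compact_open_top_def
    by (intro topology_generated_by_Basis)
      (use compactin_standard_simplex in \<open>blast intro: compactin_subtopology[THEN iffD2]\<close>)
  then have "(\<Inter>n. U n) \<in> borel_sets_of ?T"
    using sigma_algebra.countable_INT[OF sigma_algebra_borel_sets_of, of U UNIV]
    by (auto simp: borel_sets_of_def intro: sigma_sets.Basic)
  moreover have "(\<Inter>n. U n) = {f \<in> mt_simplices k (top_of_set S). f ` standard_simplex k \<subseteq> {p}}"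
  proof -
    have "U n = {f \<in> mt_simplices k (top_of_set S). f ` standard_simplex k \<subseteq> ball p (1 / real (Suc n))}"
      for n
      using mt_simplices_image_subset[of _ k "top_of_set S"] by (auto simp: U_def)
    then show ?thesis
      unfolding Inter_ball_inverse_Suc[symmetric, of p] by blast
  qed
  moreover have "\<dots> = {const_simplex k p}"
    using p singular_simplex_const_simplex[of p "top_of_set S" k]
    by (fastforce simp: mt_simplices_def singular_simplex_def const_simplex_def extensional_def
        restrict_def nonempty_standard_simplex)
  ultimately show ?thesis by simp
qed

lemma borel_sets_compact_open_countable:
  fixes S :: "'a::metric_space set"
  assumes S: "countable S"
  shows "borel_sets_of (compact_open_top k (top_of_set S)) = Pow (mt_simplices k (top_of_set S))"
proof
  show "borel_sets_of (compact_open_top k (top_of_set S)) \<subseteq> Pow (mt_simplices k (top_of_set S))"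
    using borel_sets_of_subset_topspace[of _ "compact_open_top k (top_of_set S)"]
    by (auto simp: topspace_compact_open_top)
  show "Pow (mt_simplices k (top_of_set S)) \<subseteq> borel_sets_of (compact_open_top k (top_of_set S))"
  proof
    fix A assume "A \<in> Pow (mt_simplices k (top_of_set S))"
    then have A: "A \<subseteq> const_simplex k ` S"
      by (simp add: mt_simplices_countable_metric[OF S])
    have "{\<sigma>} \<in> borel_sets_of (compact_open_top k (top_of_set S))" if "\<sigma> \<in> A" for \<sigma>
    proof -
      obtain p where "p \<in> S" "\<sigma> = const_simplex k p"
        using A \<open>\<sigma> \<in> A\<close> by blast
      then show ?thesis
        using singleton_const_simplex_in_borel_sets by blast
    qed
    moreover have "countable A"
      using countable_subset[OF A countable_image[OF S]] .
    ultimately show "A \<in> borel_sets_of (compact_open_top k (top_of_set S))"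
      by (rule sigma_algebra.countable[OF sigma_algebra_borel_sets_of])
  qed
qed

lemma compactin_mt_simplices:
  fixes S :: "'a::metric_space set"
  assumes "countable S" and "compact S"
  shows "compactin (compact_open_top k (top_of_set S)) (mt_simplices k (top_of_set S))"
proof -
  have "compactin (top_of_set S) S"
    using assms by (simp add: compactin_subtopology)
  then show ?thesis
    using image_compactin[OF _ continuous_map_const_simplex, of "top_of_set S" S k]
    by (simp add: mt_simplices_countable_metric[OF assms(1)])
qed

lemma mt_chains_eq_if_compactin:
  assumes "compactin (compact_open_top k X) (mt_simplices k X)"
  shows "mt_chains X k = {\<mu>. finite_signed_borel_measure (compact_open_top k X) \<mu>}"
proof -
  have "is_carrier (compact_open_top k X) \<mu> (mt_simplices k X)"
    if "finite_signed_borel_measure (compact_open_top k X) \<mu>" for \<mu>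
    using that unfolding is_carrier_def finite_signed_borel_measure_def
    by (simp add: topspace_compact_open_top)
  then show ?thesis
    using assms unfolding mt_chains_def by blast
qed

section \<open>Finite signed measures on a countable discrete Borel structure\<close>

lemma finite_signed_borel_measure_empty: "finite_signed_borel_measure T \<mu> \<Longrightarrow> \<mu> {} = 0"
  by (simp add: finite_signed_borel_measure_def)

lemma finite_signed_borel_measure_not_borel:
  "finite_signed_borel_measure T \<mu> \<Longrightarrow> A \<notin> borel_sets_of T \<Longrightarrow> \<mu> A = 0"
  by (simp add: finite_signed_borel_measure_def)

lemma finite_signed_borel_measure_add:
  "finite_signed_borel_measure T \<mu> \<Longrightarrow> finite_signed_borel_measure T \<nu> \<Longrightarrow>
    finite_signed_borel_measure T (\<lambda>A. \<mu> A + \<nu> A)"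
  unfolding finite_signed_borel_measure_def by (auto intro: sums_add)

lemma finite_signed_borel_measure_diff:
  "finite_signed_borel_measure T \<mu> \<Longrightarrow> finite_signed_borel_measure T \<nu> \<Longrightarrow>
    finite_signed_borel_measure T (\<lambda>A. \<mu> A - \<nu> A)"
  unfolding finite_signed_borel_measure_def by (auto intro: sums_diff)

lemma finite_signed_borel_measure_image:
  assumes \<mu>: "finite_signed_borel_measure T \<mu>" and T: "borel_sets_of T = Pow (topspace T)"
  shows "finite_signed_borel_measure T'
    (\<lambda>A. if A \<in> borel_sets_of T' then \<mu> {x \<in> topspace T. f x \<in> A} else 0)"
  unfolding finite_signed_borel_measure_def
proof (intro conjI allI impI)
  show "(if {} \<in> borel_sets_of T' then \<mu> {x \<in> topspace T. f x \<in> {}} else 0) = 0"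
    using finite_signed_borel_measure_empty[OF \<mu>] by simp
  fix A :: "nat \<Rightarrow> _"
  assume A: "range A \<subseteq> borel_sets_of T'" "disjoint_family A"
  have "range (\<lambda>m. {x \<in> topspace T. f x \<in> A m}) \<subseteq> borel_sets_of T"
    using T by auto
  moreover have "disjoint_family (\<lambda>m. {x \<in> topspace T. f x \<in> A m})"
    using A(2) by (auto simp: disjoint_family_on_def)
  ultimately have "(\<lambda>m. \<mu> {x \<in> topspace T. f x \<in> A m}) sums \<mu> (\<Union>m. {x \<in> topspace T. f x \<in> A m})"
    using \<mu> unfolding finite_signed_borel_measure_def by blast
  moreover have "(\<Union>m. {x \<in> topspace T. f x \<in> A m}) = {x \<in> topspace T. f x \<in> (\<Union>m. A m)}"
    by auto
  moreover have "(\<Union>m. A m) \<in> borel_sets_of T'"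
    using sigma_algebra.countable_UN[OF sigma_algebra_borel_sets_of, of A UNIV] A(1) by simp
  ultimately show "(\<lambda>m. if A m \<in> borel_sets_of T' then \<mu> {x \<in> topspace T. f x \<in> A m} else 0) sums
      (if (\<Union>m. A m) \<in> borel_sets_of T' then \<mu> {x \<in> topspace T. f x \<in> (\<Union>m. A m)} else 0)"
    using A(1) by (simp add: range_subsetD)
qed simp

lemma finite_signed_borel_measure_sums_singletons:
  fixes e :: "nat \<Rightarrow> 'b"
  assumes \<mu>: "finite_signed_borel_measure T \<mu>" and T: "borel_sets_of T = Pow (topspace T)"
    and e: "bij_betw e UNIV (topspace T)" and A: "A \<subseteq> topspace T"
  shows "(\<lambda>n. \<mu> (A \<inter> {e n})) sums \<mu> A"
proof -
  have "range (\<lambda>n. A \<inter> {e n}) \<subseteq> borel_sets_of T"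
    using A T by auto
  moreover have "disjoint_family (\<lambda>n. A \<inter> {e n})"
    using bij_betw_imp_inj_on[OF e] by (auto simp: disjoint_family_on_def inj_def)
  ultimately have "(\<lambda>n. \<mu> (A \<inter> {e n})) sums \<mu> (\<Union>n. A \<inter> {e n})"
    using \<mu> unfolding finite_signed_borel_measure_def by blast
  moreover have "(\<Union>n. A \<inter> {e n}) = A"
    using A bij_betw_imp_surj_on[OF e] by auto
  ultimately show ?thesis by simp
qed

lemma finite_signed_borel_measure_eqI:
  fixes e :: "nat \<Rightarrow> 'b"
  assumes "finite_signed_borel_measure T \<mu>" "finite_signed_borel_measure T \<nu>"
    and T: "borel_sets_of T = Pow (topspace T)" and e: "bij_betw e UNIV (topspace T)"
    and singletons: "\<And>n. \<mu> {e n} = \<nu> {e n}"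
  shows "\<mu> = \<nu>"
proof
  fix A
  show "\<mu> A = \<nu> A"
  proof (cases "A \<subseteq> topspace T")
    case True
    have "\<mu> (A \<inter> {e n}) = \<nu> (A \<inter> {e n})" for n
      using singletons finite_signed_borel_measure_empty[OF assms(1)]
        finite_signed_borel_measure_empty[OF assms(2)]
      by (cases "e n \<in> A") simp_all
    then have "(\<lambda>n. \<mu> (A \<inter> {e n})) sums \<nu> A"
      using finite_signed_borel_measure_sums_singletons[OF assms(2) T e True] by simp
    then show ?thesis
      using finite_signed_borel_measure_sums_singletons[OF assms(1) T e True] sums_unique2 by blast
  next
    case False
    then show ?thesis
      using assms(1,2) T by (simp add: finite_signed_borel_measure_not_borel)
  qed
qed

lemma finite_signed_borel_measure_summable_singletons:
  fixes e :: "nat \<Rightarrow> 'b"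
  assumes \<mu>: "finite_signed_borel_measure T \<mu>" and T: "borel_sets_of T = Pow (topspace T)"
    and e: "bij_betw e UNIV (topspace T)"
  shows "summable (\<lambda>n. \<bar>\<mu> {e n}\<bar>)"
proof -
  have restricted: "summable (\<lambda>n. if P (\<mu> {e n}) then \<mu> {e n} else 0)" for P
  proof -
    let ?A = "e ` {n. P (\<mu> {e n})}"
    have "?A \<subseteq> topspace T"
      using bij_betw_imp_surj_on[OF e] by auto
    moreover have "\<mu> (?A \<inter> {e n}) = (if P (\<mu> {e n}) then \<mu> {e n} else 0)" for n
    proof -
      have "?A \<inter> {e n} = (if P (\<mu> {e n}) then {e n} else {})"
        using inj_image_mem_iff[OF bij_betw_imp_inj_on[OF e]] by auto
      then show ?thesis
        using finite_signed_borel_measure_empty[OF \<mu>] by simp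
    qed
    ultimately have "(\<lambda>n. if P (\<mu> {e n}) then \<mu> {e n} else 0) sums \<mu> ?A"
      using finite_signed_borel_measure_sums_singletons[OF \<mu> T e, of ?A] by simp
    then show ?thesis
      by (rule sums_summable)
  qed
  have "(\<lambda>n. \<bar>\<mu> {e n}\<bar>) =
      (\<lambda>n. (if 0 < \<mu> {e n} then \<mu> {e n} else 0) - (if \<mu> {e n} < 0 then \<mu> {e n} else 0))"
    by (auto simp: fun_eq_iff)
  then show ?thesis
    using summable_diff[OF restricted[of "\<lambda>x. 0 < x"] restricted[of "\<lambda>x. x < 0"]] by simp
qed

text \<open>Countable additivity of a nonnegative weighted counting measure, via the measure
  with density a on the counting measure.\<close>
lemma sums_indicator_disjoint_family_nonneg:
  fixes a :: "nat \<Rightarrow> real"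
  assumes a: "\<And>n. 0 \<le> a n" "summable a" and I: "disjoint_family I"
  shows "(\<lambda>m. suminf (\<lambda>n. a n * indicator (I m) n)) sums suminf (\<lambda>n. a n * indicator (\<Union>m. I m) n)"
proof -
  let ?M = "density (count_space UNIV) (\<lambda>n. ennreal (a n))"
  have "emeasure ?M J = ennreal (suminf (\<lambda>n. a n * indicator J n))" and "0 \<le> suminf (\<lambda>n. a n * indicator J n)"
    for J
  proof -
    have nonneg: "0 \<le> a n * indicator J n" for n
      using a by simp
    have summable: "summable (\<lambda>n. a n * indicator J n)"
      by (rule summable_comparison_test[OF _ a(2)]) (auto simp: a indicator_def)
    have "emeasure ?M J = suminf (\<lambda>n. ennreal (a n) * indicator J n)"
      by (simp add: emeasure_density nn_integral_count_space_nat)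
    also have "\<dots> = suminf (\<lambda>n. ennreal (a n * indicator J n))"
      by (intro suminf_cong) (auto simp: indicator_def)
    also have "\<dots> = ennreal (suminf (\<lambda>n. a n * indicator J n))"
      by (rule suminf_ennreal2[OF nonneg summable])
    finally show "emeasure ?M J = ennreal (suminf (\<lambda>n. a n * indicator J n))" .
    show "0 \<le> suminf (\<lambda>n. a n * indicator J n)"
      by (rule suminf_nonneg[OF summable nonneg])
  qed
  then have "measure ?M J = suminf (\<lambda>n. a n * indicator J n)" and "emeasure ?M J \<noteq> \<infinity>" for J
    by (simp_all add: measure_def)
  moreover have "(\<lambda>m. measure ?M (I m)) sums measure ?M (\<Union>m. I m)"
    using calculation(2) I by (intro measure_UNION) auto
  ultimately show ?thesis by simp
qed

lemma sums_indicator_disjoint_family: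
  fixes a :: "nat \<Rightarrow> real"
  assumes a: "summable (\<lambda>n. \<bar>a n\<bar>)" and I: "disjoint_family I"
  shows "(\<lambda>m. suminf (\<lambda>n. a n * indicator (I m) n)) sums suminf (\<lambda>n. a n * indicator (\<Union>m. I m) n)"
proof -
  have pos: "summable (\<lambda>n. max (a n) 0)"
    by (rule summable_comparison_test[OF _ a]) auto
  have neg: "summable (\<lambda>n. max (- a n) 0)"
    by (rule summable_comparison_test[OF _ a]) auto
  have split: "suminf (\<lambda>n. a n * indicator J n) =
      suminf (\<lambda>n. max (a n) 0 * indicator J n) - suminf (\<lambda>n. max (- a n) 0 * indicator J n)" for J
  proof -
    have "summable (\<lambda>n. max (a n) 0 * indicator J n)" "summable (\<lambda>n. max (- a n) 0 * indicator J n)"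
      by (auto intro: summable_comparison_test[OF _ pos] summable_comparison_test[OF _ neg]
          simp: indicator_def)
    moreover have "(\<lambda>n. a n * indicator J n) =
        (\<lambda>n. max (a n) 0 * indicator J n - max (- a n) 0 * indicator J n)"
      by (auto simp: fun_eq_iff indicator_def max_def)
    ultimately show ?thesis
      by (simp add: suminf_diff)
  qed
  show ?thesis
    unfolding split
    by (intro sums_diff sums_indicator_disjoint_family_nonneg I pos neg) auto
qed

definition discrete_signed_measure :: "'b topology \<Rightarrow> (nat \<Rightarrow> 'b) \<Rightarrow> (nat \<Rightarrow> real) \<Rightarrow> 'b set \<Rightarrow> real"
  where "discrete_signed_measure T e a =
    (\<lambda>A. if A \<in> borel_sets_of T then suminf (\<lambda>n. a n * indicator A (e n)) else 0)"

lemma finite_signed_borel_measure_discrete_signed_measure: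
  assumes "summable (\<lambda>n. \<bar>a n\<bar>)"
  shows "finite_signed_borel_measure T (discrete_signed_measure T e a)"
  unfolding finite_signed_borel_measure_def
proof (intro conjI allI impI)
  show "discrete_signed_measure T e a {} = 0"
    by (simp add: discrete_signed_measure_def)
  fix A :: "nat \<Rightarrow> _"
  assume A: "range A \<subseteq> borel_sets_of T" "disjoint_family A"
  then have "(\<Union>m. A m) \<in> borel_sets_of T"
    using sigma_algebra.countable_UN[OF sigma_algebra_borel_sets_of, of A UNIV] by simp
  moreover have "disjoint_family (\<lambda>m. e -` A m)"
    using A(2) by (auto simp: disjoint_family_on_def)
  moreover have "(\<Union>m. e -` A m) = e -` (\<Union>m. A m)"
    by auto
  ultimately show "(\<lambda>m. discrete_signed_measure T e a (A m)) sums
      discrete_signed_measure T e a (\<Union>m. A m)"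
    using sums_indicator_disjoint_family[OF assms, of "\<lambda>m. e -` A m"] A(1)
    by (simp add: discrete_signed_measure_def indicator_vimage range_subsetD)
qed (simp add: discrete_signed_measure_def)

lemma discrete_signed_measure_singleton:
  assumes "inj e" and "{e k} \<in> borel_sets_of T"
  shows "discrete_signed_measure T e a {e k} = a k"
proof -
  have "(\<lambda>n. a n * indicator {e k} (e n)) = (\<lambda>n. if n = k then a n else 0)"
    by (simp add: fun_eq_iff indicator_def inj_eq[OF assms(1)])
  then show ?thesis
    using assms(2) sums_single[of k a] by (simp add: discrete_signed_measure_def sums_iff)
qed

section \<open>Milnor-Thurston homology of a countable compact metric space\<close>

lemma sum_neg_one_power_atMost: "(\<Sum>i\<le>k. (-1::real) ^ i) = (if even k then 1 else 0)"
  by (induction k) auto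

text \<open>The image measure under the degeneracy sending a simplex to the constant
  (n+1)-simplex at its 0-th vertex. On constant simplices it is inverse to the 0-th face.\<close>
definition const_lift :: "'a topology \<Rightarrow> nat \<Rightarrow> (((nat \<Rightarrow> real) \<Rightarrow> 'a) set \<Rightarrow> real)
    \<Rightarrow> (((nat \<Rightarrow> real) \<Rightarrow> 'a) set \<Rightarrow> real)" where
  "const_lift X n z = (\<lambda>A. if A \<in> borel_sets_of (compact_open_top (Suc n) X)
      then z {\<tau> \<in> mt_simplices n X. const_simplex (Suc n) (simplicial_vertex 0 \<tau>) \<in> A} else 0)"

locale countable_compact_metric =
  fixes S :: "'a::metric_space set"
  assumes countable: "countable S" and compact: "compact S"
begin

lemma mt_simplices_eq: "mt_simplices k (top_of_set S) = const_simplex k ` S"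
  by (rule mt_simplices_countable_metric[OF countable])

lemma borel_sets_eq:
  "borel_sets_of (compact_open_top k (top_of_set S)) = Pow (mt_simplices k (top_of_set S))"
  by (rule borel_sets_compact_open_countable[OF countable])

lemma mt_chains_eq:
  "mt_chains (top_of_set S) k = {\<mu>. finite_signed_borel_measure (compact_open_top k (top_of_set S)) \<mu>}"
  by (rule mt_chains_eq_if_compactin[OF compactin_mt_simplices[OF countable compact]])

lemma zero_in_mt_chains: "(\<lambda>A. 0) \<in> mt_chains (top_of_set S) k"
  by (simp add: mt_chains_eq finite_signed_borel_measure_def)

lemma add_in_mt_chains:
  "\<mu> \<in> mt_chains (top_of_set S) k \<Longrightarrow> \<nu> \<in> mt_chains (top_of_set S) k \<Longrightarrow>
    (\<lambda>A. \<mu> A + \<nu> A) \<in> mt_chains (top_of_set S) k"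
  by (simp add: mt_chains_eq finite_signed_borel_measure_add)

lemma diff_in_mt_chains:
  "\<mu> \<in> mt_chains (top_of_set S) k \<Longrightarrow> \<nu> \<in> mt_chains (top_of_set S) k \<Longrightarrow>
    (\<lambda>A. \<mu> A - \<nu> A) \<in> mt_chains (top_of_set S) k"
  by (simp add: mt_chains_eq finite_signed_borel_measure_diff)

lemma singular_face_mt_simplex:
  assumes "\<sigma> \<in> mt_simplices k (top_of_set S)" "1 \<le> k" "i \<le> k"
  shows "singular_face k i \<sigma> = const_simplex (k - 1) (simplicial_vertex 0 \<sigma>)"
proof -
  obtain p where "\<sigma> = const_simplex k p"
    using assms(1) by (auto simp: mt_simplices_eq)
  then show ?thesis
    using singular_face_const_simplex[OF assms(2,3)] by simp
qed

lemma const_lift_vertex_in_mt_simplices: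
  assumes "\<tau> \<in> mt_simplices n (top_of_set S)"
  shows "const_simplex (Suc n) (simplicial_vertex 0 \<tau>) \<in> mt_simplices (Suc n) (top_of_set S)"
  using assms by (auto simp: mt_simplices_eq)

lemma singular_face_const_lift_vertex:
  assumes "\<tau> \<in> mt_simplices n (top_of_set S)"
  shows "singular_face (Suc n) 0 (const_simplex (Suc n) (simplicial_vertex 0 \<tau>)) = \<tau>"
proof -
  obtain p where "\<tau> = const_simplex n p"
    using assms by (auto simp: mt_simplices_eq)
  then show ?thesis
    using singular_face_const_simplex[of "Suc n" 0 p] by simp
qed

lemma const_lift_vertex_singular_face:
  assumes "\<sigma> \<in> mt_simplices (Suc n) (top_of_set S)"
  shows "const_simplex (Suc n) (simplicial_vertex 0 (singular_face (Suc n) 0 \<sigma>)) = \<sigma>"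
proof -
  obtain p where "\<sigma> = const_simplex (Suc n) p"
    using assms by (auto simp: mt_simplices_eq)
  then show ?thesis
    using singular_face_const_simplex[of "Suc n" 0 p] by simp
qed

lemma singular_face_in_mt_simplices:
  assumes "\<sigma> \<in> mt_simplices (Suc n) (top_of_set S)"
  shows "singular_face (Suc n) 0 \<sigma> \<in> mt_simplices n (top_of_set S)"
proof -
  obtain p where "p \<in> S" "\<sigma> = const_simplex (Suc n) p"
    using assms by (auto simp: mt_simplices_eq)
  then show ?thesis
    using singular_face_const_simplex[of "Suc n" 0 p] by (simp add: mt_simplices_eq)
qed

lemma mt_face_eq_mt_face_0:
  assumes "1 \<le> k" "i \<le> k"
  shows "mt_face (top_of_set S) k i = mt_face (top_of_set S) k 0"
proof -
  have "{\<sigma> \<in> mt_simplices k (top_of_set S). singular_face k i \<sigma> \<in> A} =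
        {\<sigma> \<in> mt_simplices k (top_of_set S). singular_face k 0 \<sigma> \<in> A}" for A
    using singular_face_mt_simplex[OF _ assms] singular_face_mt_simplex[OF _ assms(1), of _ 0]
    by auto
  then show ?thesis
    by (simp add: mt_face_def fun_eq_iff)
qed

text \<open>All faces of a constant simplex coincide, so the boundary is the 0-th face times
  the alternating sum of signs.\<close>
lemma mt_boundary_eq:
  assumes "1 \<le> k"
  shows "mt_boundary (top_of_set S) k \<mu> = (if even k then mt_face (top_of_set S) k 0 \<mu> else (\<lambda>A. 0))"
proof -
  have "(\<Sum>i\<le>k. (-1) ^ i * mt_face (top_of_set S) k i \<mu> A) =
        (\<Sum>i\<le>k. (-1::real) ^ i * mt_face (top_of_set S) k 0 \<mu> A)" for A
  proof (rule sum.cong[OF refl])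
    fix i assume "i \<in> {..k}"
    then have "mt_face (top_of_set S) k i = mt_face (top_of_set S) k 0"
      using mt_face_eq_mt_face_0[OF assms, of i] by simp
    then show "(-1) ^ i * mt_face (top_of_set S) k i \<mu> A = (-1) ^ i * mt_face (top_of_set S) k 0 \<mu> A"
      by simp
  qed
  then have "(\<Sum>i\<le>k. (-1) ^ i * mt_face (top_of_set S) k i \<mu> A) =
        (\<Sum>i\<le>k. (-1::real) ^ i) * mt_face (top_of_set S) k 0 \<mu> A" for A
    by (simp add: sum_distrib_right)
  then show ?thesis
    using assms by (simp add: mt_boundary_def sum_neg_one_power_atMost fun_eq_iff)
qed

lemma mt_face_in_mt_chains:
  assumes "\<mu> \<in> mt_chains (top_of_set S) (Suc n)"
  shows "mt_face (top_of_set S) (Suc n) 0 \<mu> \<in> mt_chains (top_of_set S) n"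
  using finite_signed_borel_measure_image[of _ \<mu>, OF _ borel_sets_eq[of "Suc n", folded topspace_compact_open_top],
      of "compact_open_top n (top_of_set S)" "singular_face (Suc n) 0", unfolded topspace_compact_open_top]
    assms
  by (simp add: mt_chains_eq mt_face_def topspace_compact_open_top)

lemma const_lift_in_mt_chains:
  assumes "z \<in> mt_chains (top_of_set S) n"
  shows "const_lift (top_of_set S) n z \<in> mt_chains (top_of_set S) (Suc n)"
  using finite_signed_borel_measure_image[of _ z, OF _ borel_sets_eq[of n, folded topspace_compact_open_top],
      of "compact_open_top (Suc n) (top_of_set S)" "\<lambda>\<tau>. const_simplex (Suc n) (simplicial_vertex 0 \<tau>)",
      unfolded topspace_compact_open_top]
    assms
  by (simp add: mt_chains_eq const_lift_def topspace_compact_open_top)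

lemma mt_face_const_lift:
  assumes "z \<in> mt_chains (top_of_set S) n"
  shows "mt_face (top_of_set S) (Suc n) 0 (const_lift (top_of_set S) n z) = z"
proof
  fix A
  show "mt_face (top_of_set S) (Suc n) 0 (const_lift (top_of_set S) n z) A = z A"
  proof (cases "A \<subseteq> mt_simplices n (top_of_set S)")
    case True
    have "{\<tau> \<in> mt_simplices n (top_of_set S). const_simplex (Suc n) (simplicial_vertex 0 \<tau>)
        \<in> {\<sigma> \<in> mt_simplices (Suc n) (top_of_set S). singular_face (Suc n) 0 \<sigma> \<in> A}} = A"
      using True const_lift_vertex_in_mt_simplices singular_face_const_lift_vertex by auto
    then show ?thesis
      using True by (simp add: mt_face_def const_lift_def borel_sets_eq)
  next
    case False
    then have "A \<notin> borel_sets_of (compact_open_top n (top_of_set S))"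
      by (simp add: borel_sets_eq)
    then show ?thesis
      using assms by (simp add: mt_face_def mt_chains_eq finite_signed_borel_measure_not_borel)
  qed
qed

lemma const_lift_mt_face:
  assumes "\<mu> \<in> mt_chains (top_of_set S) (Suc n)"
  shows "const_lift (top_of_set S) n (mt_face (top_of_set S) (Suc n) 0 \<mu>) = \<mu>"
proof
  fix A
  show "const_lift (top_of_set S) n (mt_face (top_of_set S) (Suc n) 0 \<mu>) A = \<mu> A"
  proof (cases "A \<subseteq> mt_simplices (Suc n) (top_of_set S)")
    case True
    have "{\<sigma> \<in> mt_simplices (Suc n) (top_of_set S). singular_face (Suc n) 0 \<sigma>
        \<in> {\<tau> \<in> mt_simplices n (top_of_set S). const_simplex (Suc n) (simplicial_vertex 0 \<tau>) \<in> A}} = A"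
      using True singular_face_in_mt_simplices const_lift_vertex_singular_face by auto
    then show ?thesis
      using True by (simp add: mt_face_def const_lift_def borel_sets_eq)
  next
    case False
    then have "A \<notin> borel_sets_of (compact_open_top (Suc n) (top_of_set S))"
      by (simp add: borel_sets_eq)
    then show ?thesis
      using assms by (simp add: const_lift_def mt_chains_eq finite_signed_borel_measure_not_borel)
  qed
qed

lemma mt_cycles_odd:
  assumes "odd n"
  shows "mt_cycles (top_of_set S) n = mt_chains (top_of_set S) n"
proof -
  have "1 \<le> n"
    using assms by (cases n) auto
  then show ?thesis
    using assms by (simp add: mt_cycles_def mt_boundary_eq)
qed

lemma mt_boundaries_odd:
  assumes "odd n"
  shows "mt_boundaries (top_of_set S) n = mt_chains (top_of_set S) n"
proof -
  have "mt_boundaries (top_of_set S) n = mt_face (top_of_set S) (Suc n) 0 ` mt_chains (top_of_set S) (Suc n)"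
    using assms by (simp add: mt_boundaries_def mt_boundary_eq)
  also have "\<dots> = mt_chains (top_of_set S) n"
  proof
    show "mt_face (top_of_set S) (Suc n) 0 ` mt_chains (top_of_set S) (Suc n) \<subseteq> mt_chains (top_of_set S) n"
      using mt_face_in_mt_chains by blast
    show "mt_chains (top_of_set S) n \<subseteq> mt_face (top_of_set S) (Suc n) 0 ` mt_chains (top_of_set S) (Suc n)"
      using mt_face_const_lift const_lift_in_mt_chains by (metis image_eqI subsetI)
  qed
  finally show ?thesis .
qed

lemma mt_homology_odd:
  assumes "odd n"
  shows "mt_homology (top_of_set S) n = {mt_boundaries (top_of_set S) n}"
proof -
  have "mt_class (top_of_set S) n z = mt_chains (top_of_set S) n" if z: "z \<in> mt_chains (top_of_set S) n" for z
  proof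
    show "mt_class (top_of_set S) n z \<subseteq> mt_chains (top_of_set S) n"
      using z add_in_mt_chains by (auto simp: mt_class_def mt_boundaries_odd[OF assms])
    show "mt_chains (top_of_set S) n \<subseteq> mt_class (top_of_set S) n z"
    proof
      fix c assume c: "c \<in> mt_chains (top_of_set S) n"
      show "c \<in> mt_class (top_of_set S) n z"
        unfolding mt_class_def mt_boundaries_odd[OF assms] using diff_in_mt_chains[OF c z]
        by (auto intro!: exI[of _ "\<lambda>A. c A - z A"])
    qed
  qed
  then show ?thesis
    using zero_in_mt_chains
    by (auto simp: mt_homology_def mt_cycles_odd[OF assms] mt_boundaries_odd[OF assms])
qed

lemma mt_cycles_even:
  assumes "even n" "0 < n"
  shows "mt_cycles (top_of_set S) n = {\<lambda>A. 0}"
proof -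
  obtain m where n: "n = Suc m"
    using assms(2) by (cases n) auto
  have "\<mu> = (\<lambda>A. 0)" if "\<mu> \<in> mt_cycles (top_of_set S) n" for \<mu>
  proof -
    have "mt_face (top_of_set S) n 0 \<mu> = (\<lambda>A. 0)" and \<mu>: "\<mu> \<in> mt_chains (top_of_set S) (Suc m)"
      using that assms n by (simp_all add: mt_cycles_def mt_boundary_eq)
    then have "\<mu> = const_lift (top_of_set S) m (\<lambda>A. 0)"
      using const_lift_mt_face[OF \<mu>] n by simp
    then show ?thesis
      by (simp add: const_lift_def)
  qed
  moreover have "mt_boundary (top_of_set S) n (\<lambda>A. 0) = (\<lambda>A. 0)"
    using assms by (simp add: mt_boundary_eq mt_face_def)
  ultimately show ?thesis
    using zero_in_mt_chains by (auto simp: mt_cycles_def)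
qed

lemma mt_homology_positive:
  assumes "0 < n"
  shows "mt_homology (top_of_set S) n = {mt_boundaries (top_of_set S) n}"
proof (cases "even n")
  case True
  have "mt_class (top_of_set S) n (\<lambda>A. 0) = mt_boundaries (top_of_set S) n"
    by (simp add: mt_class_def)
  then show ?thesis
    using True assms by (simp add: mt_homology_def mt_cycles_even)
next
  case False
  then show ?thesis
    by (rule mt_homology_odd)
qed

lemma mt_class_0: "mt_class (top_of_set S) 0 z = {z}"
proof -
  have "mt_boundaries (top_of_set S) 0 = {\<lambda>A. 0}"
    using zero_in_mt_chains by (auto simp: mt_boundaries_def mt_boundary_eq)
  then show ?thesis
    by (simp add: mt_class_def)
qed

lemma mt_homology_0: "mt_homology (top_of_set S) 0 = (\<lambda>z. {z}) ` mt_chains (top_of_set S) 0"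
  by (simp add: mt_homology_def mt_cycles_def mt_boundary_def mt_class_0)

lemma bij_betw_mt_chains_ell1:
  fixes e :: "nat \<Rightarrow> 'a"
  assumes e: "bij_betw e UNIV S"
  shows "bij_betw (\<lambda>\<mu> j. \<mu> {const_simplex k (e j)}) (mt_chains (top_of_set S) k) ell1"
proof -
  let ?T = "compact_open_top k (top_of_set S)"
  let ?v = "\<lambda>j. const_simplex k (e j)"
  have "bij_betw (const_simplex k) S (topspace ?T)"
    unfolding topspace_compact_open_top mt_simplices_eq by (rule bij_betw_imageI) (simp_all add: inj_on_def)
  then have v: "bij_betw ?v UNIV (topspace ?T)"
    using bij_betw_trans[OF e] by (simp add: comp_def)
  have T: "borel_sets_of ?T = Pow (topspace ?T)"
    by (simp add: borel_sets_eq topspace_compact_open_top)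
  show ?thesis
  proof (rule bij_betw_imageI)
    show "inj_on (\<lambda>\<mu> j. \<mu> {?v j}) (mt_chains (top_of_set S) k)"
    proof (rule inj_onI)
      fix \<mu> \<nu> assume "\<mu> \<in> mt_chains (top_of_set S) k" "\<nu> \<in> mt_chains (top_of_set S) k"
        and "(\<lambda>j. \<mu> {?v j}) = (\<lambda>j. \<nu> {?v j})"
      then show "\<mu> = \<nu>"
        using finite_signed_borel_measure_eqI[OF _ _ T v, of \<mu> \<nu>] by (simp add: mt_chains_eq fun_eq_iff)
    qed
    show "(\<lambda>\<mu> j. \<mu> {?v j}) ` mt_chains (top_of_set S) k = ell1"
    proof
      show "(\<lambda>\<mu> j. \<mu> {?v j}) ` mt_chains (top_of_set S) k \<subseteq> ell1"
        using finite_signed_borel_measure_summable_singletons[OF _ T v]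
        by (auto simp: mt_chains_eq ell1_def)
      show "ell1 \<subseteq> (\<lambda>\<mu> j. \<mu> {?v j}) ` mt_chains (top_of_set S) k"
      proof
        fix a assume a: "a \<in> ell1"
        have "{?v j} \<in> borel_sets_of ?T" for j
          using bij_betwE[OF v] by (simp add: T)
        then have "a = (\<lambda>j. discrete_signed_measure ?T ?v a {?v j})"
          using discrete_signed_measure_singleton[OF bij_betw_imp_inj_on[OF v]] by (simp add: fun_eq_iff)
        moreover have "discrete_signed_measure ?T ?v a \<in> mt_chains (top_of_set S) k"
          using a by (simp add: mt_chains_eq ell1_def finite_signed_borel_measure_discrete_signed_measure)
        ultimately show "a \<in> (\<lambda>\<mu> j. \<mu> {?v j}) ` mt_chains (top_of_set S) k"
          by (rule image_eqI)
      qed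
    qed
  qed
qed

lemma mt_homology_0_ell1:
  fixes e :: "nat \<Rightarrow> 'a"
  assumes e: "bij_betw e UNIV S"
  shows "\<exists>\<Phi>. bij_betw \<Phi> (mt_homology (top_of_set S) 0) ell1
    \<and> (\<forall>z \<in> mt_cycles (top_of_set S) 0. \<forall>w \<in> mt_cycles (top_of_set S) 0.
         \<Phi> (mt_class (top_of_set S) 0 (\<lambda>A. z A + w A))
           = (\<lambda>k. \<Phi> (mt_class (top_of_set S) 0 z) k + \<Phi> (mt_class (top_of_set S) 0 w) k))
    \<and> (\<forall>z \<in> mt_cycles (top_of_set S) 0. \<forall>r::real.
         \<Phi> (mt_class (top_of_set S) 0 (\<lambda>A. r * z A))
           = (\<lambda>k. r * \<Phi> (mt_class (top_of_set S) 0 z) k))"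
proof -
  define \<Phi> where "\<Phi> C = (\<lambda>j. the_elem C {const_simplex 0 (e j)})"
    for C :: "(((nat \<Rightarrow> real) \<Rightarrow> 'a) set \<Rightarrow> real) set"
  have \<Phi>: "\<Phi> (mt_class (top_of_set S) 0 z) = (\<lambda>j. z {const_simplex 0 (e j)})" for z
    by (simp add: \<Phi>_def mt_class_0)
  have "bij_betw (\<lambda>z. {z}) (mt_chains (top_of_set S) 0) (mt_homology (top_of_set S) 0)"
    by (rule bij_betw_imageI) (simp_all add: inj_on_def mt_homology_0)
  from bij_betw_comp_iff[OF this, of \<Phi> ell1]
  have "bij_betw \<Phi> (mt_homology (top_of_set S) 0) ell1"
    using bij_betw_mt_chains_ell1[OF e, of 0] by (simp add: \<Phi>_def comp_def)
  then show ?thesis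
    by (intro exI[of _ \<Phi>] conjI ballI allI) (simp_all add: \<Phi>)
qed

end

section \<open>The convergent sequence\<close>

definition conv_seq_point :: "nat \<Rightarrow> real" where
  "conv_seq_point k = (if k = 0 then 0 else 1 / real k)"

lemma bij_betw_conv_seq_point: "bij_betw conv_seq_point UNIV ({0} \<union> {1 / real k | k. k \<ge> 1})"
proof (rule bij_betw_imageI)
  show "inj conv_seq_point"
    by (auto simp: inj_def conv_seq_point_def split: if_splits)
  have "x \<in> range conv_seq_point" if "x \<in> {0} \<union> {1 / real k | k. k \<ge> 1}" for x
    using that by (auto simp: conv_seq_point_def image_iff intro: exI[of _ 0])
  then show "range conv_seq_point = {0} \<union> {1 / real k | k. k \<ge> 1}"
    by (auto simp: conv_seq_point_def)
qed

lemma compact_conv_seq: "compact ({0} \<union> {1 / real k | k. k \<ge> 1})"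
proof -
  have "{0} \<union> {1 / real k | k. k \<ge> 1} = insert 0 (range (\<lambda>n. 1 / real (Suc n)))"
  proof (intro equalityI subsetI)
    have "1 / real k \<in> range (\<lambda>n. 1 / real (Suc n))" if "k \<ge> 1" for k
      using that by (intro image_eqI[of _ _ "k - 1"]) auto
    then show "x \<in> insert 0 (range (\<lambda>n. 1 / real (Suc n)))"
      if "x \<in> {0} \<union> {1 / real k | k. k \<ge> 1}" for x
      using that by blast
    have "1 / real (Suc n) \<in> {1 / real k | k. k \<ge> 1}" for n
      by (rule CollectI, rule exI[of _ "Suc n"]) simp
    then show "x \<in> {0} \<union> {1 / real k | k. k \<ge> 1}"
      if "x \<in> insert 0 (range (\<lambda>n. 1 / real (Suc n)))" for x
      using that by blast
  qed
  moreover have "(\<lambda>n. 1 / real (Suc n)) \<longlonglongrightarrow> 0"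
    by (rule LIMSEQ_Suc) (rule lim_const_over_n)
  ultimately show ?thesis
    by (simp add: compact_sequence_with_limit)
qed

theorem lemma2:
  shows "(\<forall>n > 0. mt_homology conv_seq_space n = {mt_boundaries conv_seq_space n})
    \<and> (\<exists>\<Phi>. bij_betw \<Phi> (mt_homology conv_seq_space 0) ell1
        \<and> (\<forall>z \<in> mt_cycles conv_seq_space 0. \<forall>w \<in> mt_cycles conv_seq_space 0.
             \<Phi> (mt_class conv_seq_space 0 (\<lambda>A. z A + w A))
               = (\<lambda>k. \<Phi> (mt_class conv_seq_space 0 z) k + \<Phi> (mt_class conv_seq_space 0 w) k))
        \<and> (\<forall>z \<in> mt_cycles conv_seq_space 0. \<forall>r::real.
             \<Phi> (mt_class conv_seq_space 0 (\<lambda>A. r * z A))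
               = (\<lambda>k. r * \<Phi> (mt_class conv_seq_space 0 z) k)))"
proof -
  interpret countable_compact_metric "{0} \<union> {1 / real k | k. k \<ge> 1}"
  proof
    show "countable ({0} \<union> {1 / real k | k. k \<ge> 1})"
      using countable_image[of UNIV conv_seq_point] bij_betw_imp_surj_on[OF bij_betw_conv_seq_point]
      by simp
  qed (rule compact_conv_seq)
  show ?thesis
    unfolding conv_seq_space_def
    using mt_homology_positive mt_homology_0_ell1[OF bij_betw_conv_seq_point] by blast
qed

end
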